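(* With the notation below, the $\varphi$-Koszul complex $\mathcal{FK}_\bullet(x_1,\ldots,x_n)$ is a (finite) free resolution of $S/I_n$ in the category of left $S[\Theta;\varphi]$-modules, where $I_n=\langle x_1,\ldots,x_n\rangle$; that is, $H_l(\mathcal{FK}_\bullet(x_1,\ldots,x_n))=0$ for all $l\geq 1$ and $H_0(\mathcal{FK}_\bullet(x_1,\ldots,x_n))\cong S/I_n$ as left $S[\Theta;\varphi]$-modules.
   Context: Let $\mathbb{K}$ be a commutative ring and $S=\mathbb{K}[x_1,\ldots,x_n]$. Let $\varphi:S\to S$ be a flat $\mathbb{K}$-algebra endomorphism with $\varphi(x_i)\in\langle x_i\rangle$ for each $i$, and fix nonzero $s_1,\ldots,s_n\in S$ with $\varphi(x_i)=s_ix_i$. The left skew polynomial ring $S[\Theta;\varphi]$ is the ring which is a free left $S$-module with basis $\{\Theta^i\}_{i\geq0}$ and multiplication determined by $\Theta a=\varphi(a)\Theta$ for $a\in S$. $S/I_n$ is a left $S[\Theta;\varphi]$-module with $S$ acting naturally and $\Theta$ acting by the map induced by $\varphi$ (well defined since $\varphi(I_n)\subseteq I_n$). For $J=\{j_1<\cdots<j_k\}\subseteq\{1,\ldots,n\}$ write $s_J=s_{j_1}\cdots s_{j_k}$ (with $s_\emptyset=1$) and $\mathbf{e}_J=\mathbf{e}_{j_1}\wedge\cdots\wedge\mathbf{e}_{j_k}$. The $\varphi$-Koszul complex $\mathcal{FK}_\bullet(x_1,\ldots,x_n)$ is defined as follows: for $0\leq l\leq n+1$, $\mathcal{FK}_l$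 is the free left $S[\Theta;\varphi]$-module with basis $\{\mathbf{e}_I : |I|=l\}\cup\{\mathbf{e}_J\wedge u : |J|=l-1\}$ (so $\mathcal{FK}_0=S[\Theta;\varphi]$ with basis $\mathbf{e}_\emptyset$, and $\mathcal{FK}_{n+1}$ has the single basis element $\mathbf{e}_{\{1,\ldots,n\}}\wedge u$), and $\partial_l:\mathcal{FK}_l\to\mathcal{FK}_{l-1}$ ($1\le l\le n+1$; $\partial_0=\partial_{n+2}=0$) is the left $S[\Theta;\varphi]$-linear map given on basis elements by $\partial_l(\mathbf{e}_I)=\sum_{r=1}^{l}(-1)^{r-1}x_{i_r}\,\mathbf{e}_{I\setminus\{i_r\}}$ for $I=\{i_1<\cdots<i_l\}$, and $\partial_l(\mathbf{e}_J\wedge u)=(-1)^{l-1}(\Theta-s_J)\,\mathbf{e}_J+\sum_{r=1}^{l-1}(-1)^{r-1}\varphi(x_{j_r})\,\mathbf{e}_{J\setminus\{j_r\}}\wedge u$ for $J=\{j_1<\cdots<j_{l-1}\}$ (in particular $\partial_1(u)=\Theta-1$). *)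

theory Defs
  imports Main "HOL-Library.Poly_Mapping"
begin

text \<open>The polynomial ring S = K[x_i : i in 'n] over a commutative ring K, with the
 variables indexed by a finite linearly ordered type 'n (so n = CARD('n)),
 represented as finitely supported maps from monomials to coefficients.\<close>

type_synonym ('n, 'k) mpoly = "('n \<Rightarrow>\<^sub>0 nat) \<Rightarrow>\<^sub>0 'k"

definition Var :: "'n \<Rightarrow> ('n, 'k::comm_ring_1) mpoly" where
  "Var i = Poly_Mapping.single (Poly_Mapping.single i 1) 1"

definition Const :: "'k \<Rightarrow> ('n, 'k::comm_ring_1) mpoly" where
  "Const c = Poly_Mapping.single 0 c"

definition alg_endo :: "(('n, 'k::comm_ring_1) mpoly \<Rightarrow> ('n, 'k) mpoly) \<Rightarrow> bool" where
  "alg_endo \<phi> \<longleftrightarrow> (\<forall>p q. \<phi> (p + q) = \<phi> p + \<phi> q) \<and> (\<forall>p q. \<phi> (p * q) = \<phi> p * \<phi> q)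
     \<and> \<phi> 1 = 1 \<and> (\<forall>c. \<phi> (Const c) = Const c)"

text \<open>Flatness of S regarded as an S-module via phi (r . m = phi r * m),
 stated via the equational criterion for flatness.\<close>
definition flat_endo :: "('a::comm_ring_1 \<Rightarrow> 'a) \<Rightarrow> bool" where
  "flat_endo \<phi> \<longleftrightarrow> (\<forall>(m::nat) (f::nat \<Rightarrow> 'a) (g::nat \<Rightarrow> 'a).
      (\<Sum>i<m. \<phi> (f i) * g i) = 0 \<longrightarrow>
      (\<exists>(k::nat) (a::nat \<Rightarrow> nat \<Rightarrow> 'a) (h::nat \<Rightarrow> 'a).
         (\<forall>i<m. g i = (\<Sum>j<k. \<phi> (a i j) * h j)) \<and>
         (\<forall>j<k. (\<Sum>i<m. f i * a i j) = 0)))"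

text \<open>The skew polynomial ring S[Theta; phi]: elements are finitely supported maps
 nat => S (coefficient of Theta^i, written on the left); multiplication is
 (a Theta^i)(b Theta^j) = a phi^i(b) Theta^(i+j).  NB: the built-in * on
 nat =>0 S is the commutative one and is NOT used.\<close>
type_synonym ('n, 'k) skew = "nat \<Rightarrow>\<^sub>0 ('n, 'k) mpoly"

definition skmult :: "(('n, 'k::comm_ring_1) mpoly \<Rightarrow> ('n, 'k) mpoly) \<Rightarrow>
    ('n, 'k) skew \<Rightarrow> ('n, 'k) skew \<Rightarrow> ('n, 'k) skew" where
  "skmult \<phi> f g = (\<Sum>i\<in>Poly_Mapping.keys f. \<Sum>j\<in>Poly_Mapping.keys g.
      Poly_Mapping.single (i + j) (Poly_Mapping.lookup f i * (\<phi> ^^ i) (Poly_Mapping.lookup g j)))"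

definition emb :: "('n, 'k::comm_ring_1) mpoly \<Rightarrow> ('n, 'k) skew" where
  "emb a = Poly_Mapping.single 0 a"

definition Theta :: "('n, 'k::comm_ring_1) skew" where
  "Theta = Poly_Mapping.single 1 1"

text \<open>Action of S[Theta;phi] on S (descending to S/I_n).\<close>
definition act :: "(('n, 'k::comm_ring_1) mpoly \<Rightarrow> ('n, 'k) mpoly) \<Rightarrow>
    ('n, 'k) skew \<Rightarrow> ('n, 'k) mpoly \<Rightarrow> ('n, 'k) mpoly" where
  "act \<phi> r a = (\<Sum>i\<in>Poly_Mapping.keys r. Poly_Mapping.lookup r i * (\<phi> ^^ i) a)"

definition in_In :: "('n::finite, 'k::comm_ring_1) mpoly \<Rightarrow> bool" where
  "in_In p \<longleftrightarrow> (\<exists>c :: 'n \<Rightarrow> ('n, 'k) mpoly. p = (\<Sum>i\<in>UNIV. c i * Var i))"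

text \<open>Basis elements of the phi-Koszul complex: (I, False) is e_I, (J, True) is e_J /\ u.\<close>
definition kdeg :: "'n set \<times> bool \<Rightarrow> nat" where
  "kdeg B = card (fst B) + (if snd B then 1 else 0)"

text \<open>Sign (-1)^(r-1) where i is the r-th smallest element of I.\<close>
definition pos_sign :: "'n::linorder set \<Rightarrow> 'n \<Rightarrow> ('n, 'k::comm_ring_1) mpoly" where
  "pos_sign I i = (-1) ^ card {j\<in>I. j < i}"

text \<open>bd phi s B B' = coefficient of basis element B' in the boundary of B.\<close>
fun bd :: "(('n::{finite,linorder}, 'k::comm_ring_1) mpoly \<Rightarrow> ('n, 'k) mpoly) \<Rightarrow>
    ('n \<Rightarrow> ('n, 'k) mpoly) \<Rightarrow> 'n set \<times> bool \<Rightarrow> 'n set \<times> bool \<Rightarrow> ('n, 'k) skew" where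
  "bd \<phi> s (I, False) (I', b') =
     (if b' then 0 else
        (\<Sum>i\<in>I. if I' = I - {i} then emb (pos_sign I i * Var i) else 0))"
| "bd \<phi> s (J, True) (J', b') =
     (if b' then
        (\<Sum>j\<in>J. if J' = J - {j} then emb (pos_sign J j * \<phi> (Var j)) else 0)
      else if J' = J then
        (if even (card J) then Theta - emb (\<Prod>j\<in>J. s j)
         else - (Theta - emb (\<Prod>j\<in>J. s j)))
      else 0)"

text \<open>Chains: elements of the free module with basis all B; those of degree l
 form FK_l.  The differential is extended left-S[Theta;phi]-linearly.\<close>
definition chain_in :: "nat \<Rightarrow> ('n set \<times> bool \<Rightarrow> ('n, 'k::comm_ring_1) skew) \<Rightarrow> bool" where
  "chain_in l c \<longleftrightarrow> (\<forall>B. kdeg B \<noteq> l \<longrightarrow> c B = 0)"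

definition dd :: "(('n::{finite,linorder}, 'k::comm_ring_1) mpoly \<Rightarrow> ('n, 'k) mpoly) \<Rightarrow>
    ('n \<Rightarrow> ('n, 'k) mpoly) \<Rightarrow> ('n set \<times> bool \<Rightarrow> ('n, 'k) skew) \<Rightarrow> ('n set \<times> bool \<Rightarrow> ('n, 'k) skew)" where
  "dd \<phi> s c = (\<lambda>B'. \<Sum>B\<in>UNIV. skmult \<phi> (c B) (bd \<phi> s B B'))"

end

theory Submission
  imports Defs
begin

text \<open>Write a chain as \<open>\<Sum>\<^sub>k \<Theta>\<^sup>k (\<Sum>\<^sub>I a\<^sub>k(I) e\<^sub>I + \<Sum>\<^sub>J b\<^sub>k(J) e\<^sub>J \<and> u)\<close>. The differential
  splits by powers of \<open>\<Theta>\<close>: on the \<open>a\<^sub>k\<close> and \<open>b\<^sub>k\<close> it acts as the ordinary Koszul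
  differentials of the sequences \<open>\<phi>\<^sup>k(x)\<close> and \<open>\<phi>\<^bsup>k+1\<^esup>(x)\<close>, and the two parts are linked by
  \<open>e\<^sub>J \<mapsto> \<plusminus>(\<Theta> - s\<^sub>J) e\<^sub>J\<close>, so the complex is a mapping cone.
  Every Koszul complex \<open>K(\<phi>\<^sup>k(x))\<close> is exact in positive degrees: for \<open>k = 0\<close> by the
  contracting homotopy on monomials, and flatness of \<open>\<phi>\<close> carries exactness of \<open>K(y)\<close> over
  to \<open>K(\<phi>(y))\<close>. A cycle is lifted by first lifting its \<open>u\<close>-part and then the corrected
  \<open>e\<close>-part; when the \<open>u\<close>-part has degree \<open>0\<close>, \<open>b\<^sub>k(\<emptyset>) \<in> (\<phi>\<^bsup>k+1\<^esup>(x))\<close> follows by descending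
  induction on \<open>k\<close>, since chains are polynomial in \<open>\<Theta>\<close>. In degree \<open>0\<close>, the augmentation
  \<open>\<Theta> \<mapsto> 1\<close> identifies the cokernel of \<open>\<partial>\<^sub>1\<close> with \<open>S/I\<^sub>n\<close>, because \<open>a - \<epsilon>(a)\<close> is a multiple
  of \<open>\<Theta> - 1\<close>.\<close>

section \<open>Algebra endomorphisms and ideals\<close>

context
  fixes f :: "('n, 'k::comm_ring_1) mpoly \<Rightarrow> ('n, 'k) mpoly"
  assumes f: "alg_endo f"
begin

lemma alg_endo_add: "f (p + q) = f p + f q"
  using f by (simp add: alg_endo_def)

lemma alg_endo_mult: "f (p * q) = f p * f q"
  using f by (simp add: alg_endo_def)

lemma alg_endo_one: "f 1 = 1"
  using f by (simp add: alg_endo_def)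

lemma alg_endo_zero: "f 0 = 0"
  using alg_endo_add[of 0 0] by simp

lemma alg_endo_uminus: "f (- p) = - f p"
  using alg_endo_add[of p "- p"] by (simp add: alg_endo_zero add_eq_0_iff)

lemma alg_endo_sum: "f (\<Sum>x\<in>A. g x) = (\<Sum>x\<in>A. f (g x))"
  by (induction A rule: infinite_finite_induct) (simp_all add: alg_endo_zero alg_endo_add)

end

lemma alg_endo_pos_sign:
  assumes "alg_endo f"
  shows "f (pos_sign I i) = pos_sign I i"
proof -
  have "f ((-1) ^ m) = (-1) ^ m" for m
    by (induction m) (simp_all add: assms alg_endo_one alg_endo_mult alg_endo_uminus)
  then show ?thesis
    by (simp add: pos_sign_def)
qed

lemma alg_endo_funpow: "alg_endo f \<Longrightarrow> alg_endo (f ^^ k)"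
  by (induction k) (simp_all add: alg_endo_def)

definition in_ideal_of :: "('i::finite \<Rightarrow> 'a::comm_ring_1) \<Rightarrow> 'a \<Rightarrow> bool" where
  "in_ideal_of y p \<longleftrightarrow> (\<exists>c. p = (\<Sum>i\<in>UNIV. c i * y i))"

lemma in_In_iff_in_ideal_of: "in_In p \<longleftrightarrow> in_ideal_of Var p"
  by (simp add: in_In_def in_ideal_of_def)

lemma in_In_0: "in_In 0"
  unfolding in_In_def by (rule exI[of _ "\<lambda>_. 0"]) simp

lemma in_ideal_of_0: "in_ideal_of y 0"
  unfolding in_ideal_of_def by (rule exI[of _ "\<lambda>_. 0"]) simp

lemma in_ideal_of_generator: "in_ideal_of y (y i)"
  unfolding in_ideal_of_def
proof (rule exI[of _ "\<lambda>j. if j = i then 1 else 0"])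
  have "(\<Sum>j\<in>UNIV. (if j = i then 1 else 0) * y j) = (\<Sum>j\<in>UNIV. if j = i then y j else 0)"
    by (rule sum.cong) simp_all
  then show "y i = (\<Sum>j\<in>UNIV. (if j = i then 1 else 0) * y j)"
    by simp
qed

lemma in_ideal_of_add:
  assumes "in_ideal_of y p" and "in_ideal_of y q"
  shows "in_ideal_of y (p + q)"
proof -
  obtain c d where "p = (\<Sum>i\<in>UNIV. c i * y i)" and "q = (\<Sum>i\<in>UNIV. d i * y i)"
    using assms by (auto simp: in_ideal_of_def)
  then have "p + q = (\<Sum>i\<in>UNIV. (c i + d i) * y i)"
    by (simp add: sum.distrib distrib_right)
  then show ?thesis
    unfolding in_ideal_of_def by (rule exI[of _ "\<lambda>i. c i + d i"])
qed

lemma in_ideal_of_mult_left: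
  assumes "in_ideal_of y p"
  shows "in_ideal_of y (r * p)"
proof -
  obtain c where "p = (\<Sum>i\<in>UNIV. c i * y i)"
    using assms by (auto simp: in_ideal_of_def)
  then have "r * p = (\<Sum>i\<in>UNIV. (r * c i) * y i)"
    by (simp add: sum_distrib_left mult.assoc)
  then show ?thesis
    unfolding in_ideal_of_def by (rule exI[of _ "\<lambda>i. r * c i"])
qed

lemma in_ideal_of_diff: "in_ideal_of y p \<Longrightarrow> in_ideal_of y q \<Longrightarrow> in_ideal_of y (p - q)"
  using in_ideal_of_add[of y p "(-1) * q"] in_ideal_of_mult_left[of y q "-1"] by simp

lemma in_ideal_of_sum: "(\<And>x. x \<in> A \<Longrightarrow> in_ideal_of y (g x)) \<Longrightarrow> in_ideal_of y (\<Sum>x\<in>A. g x)"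
  by (induction A rule: infinite_finite_induct) (simp_all add: in_ideal_of_0 in_ideal_of_add)

lemma in_ideal_of_trans:
  assumes "\<And>i. in_ideal_of y (y' i)" and "in_ideal_of y' p"
  shows "in_ideal_of y p"
proof -
  obtain c where "p = (\<Sum>i\<in>UNIV. c i * y' i)"
    using assms(2) by (auto simp: in_ideal_of_def)
  then show ?thesis
    using assms(1) by (simp add: in_ideal_of_sum in_ideal_of_mult_left)
qed

lemma in_ideal_of_alg_endo:
  assumes "alg_endo f" and "\<And>i. in_ideal_of y (f (y i))" and "in_ideal_of y p"
  shows "in_ideal_of y (f p)"
proof -
  obtain c where "p = (\<Sum>i\<in>UNIV. c i * y i)"
    using assms(3) by (auto simp: in_ideal_of_def)
  then have "f p = (\<Sum>i\<in>UNIV. f (c i) * f (y i))"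
    using assms(1) by (simp add: alg_endo_sum alg_endo_mult)
  then show ?thesis
    using assms(2) by (simp add: in_ideal_of_sum in_ideal_of_mult_left)
qed

section \<open>The Koszul complex of a sequence\<close>

text \<open>A Koszul chain is given by its coordinates \<open>z I\<close> at the basis elements \<open>e\<^sub>I\<close>.\<close>

definition koszul_diff ::
    "('n::{finite,linorder} \<Rightarrow> ('n, 'k::comm_ring_1) mpoly) \<Rightarrow> ('n set \<Rightarrow> ('n, 'k) mpoly) \<Rightarrow>
     'n set \<Rightarrow> ('n, 'k) mpoly" where
  "koszul_diff y z I = (\<Sum>i\<in>-I. pos_sign (insert i I) i * y i * z (insert i I))"

definition koszul_chain :: "nat \<Rightarrow> ('n set \<Rightarrow> 'a::zero) \<Rightarrow> bool" where
  "koszul_chain l z \<longleftrightarrow> (\<forall>I. card I \<noteq> l \<longrightarrow> z I = 0)"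

definition koszul_exact :: "('n::{finite,linorder} \<Rightarrow> ('n, 'k::comm_ring_1) mpoly) \<Rightarrow> bool" where
  "koszul_exact y \<longleftrightarrow> (\<forall>l\<ge>1. \<forall>z. koszul_chain l z \<and> koszul_diff y z = (\<lambda>_. 0) \<longrightarrow>
      (\<exists>w. koszul_chain (Suc l) w \<and> koszul_diff y w = z))"

lemma koszul_exactD:
  assumes "koszul_exact y" and "1 \<le> l" and "koszul_chain l z" and "koszul_diff y z = (\<lambda>_. 0)"
  obtains w where "koszul_chain (Suc l) w" and "koszul_diff y w = z"
  using assms unfolding koszul_exact_def by blast

lemma koszul_diff_0: "koszul_diff y (\<lambda>_. 0) = (\<lambda>_. 0)"
  by (simp add: koszul_diff_def fun_eq_iff)

lemma koszul_diff_diff: "koszul_diff y (\<lambda>I. f I - g I) J = koszul_diff y f J - koszul_diff y g J"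
  by (simp add: koszul_diff_def right_diff_distrib sum_subtractf)

lemma pos_sign_singleton: "pos_sign {i} i = 1"
proof -
  have "{j \<in> {i}. j < i} = {}"
    by auto
  then show ?thesis
    by (simp only: pos_sign_def card.empty power_0)
qed

lemma koszul_diff_empty: "koszul_diff y z {} = (\<Sum>i\<in>UNIV. z {i} * y i)"
  by (simp add: koszul_diff_def pos_sign_singleton mult.commute)

lemma koszul_diff_restrict:
  "koszul_diff y (\<lambda>I. if card I = Suc m then w I else 0) J =
     (if card J = m then koszul_diff y w J else 0)"
  by (auto simp: koszul_diff_def intro!: sum.cong sum.neutral)

lemma koszul_cycle_restrict:
  assumes "koszul_diff y w = (\<lambda>_. 0)" and "1 \<le> l"
  shows "koszul_diff y (\<lambda>I. if card I = l then w I else 0) = (\<lambda>_. 0)"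
proof -
  have "(\<lambda>I. if card I = l then w I else 0) = (\<lambda>I. if card I = Suc (l - 1) then w I else 0)"
    using assms(2) by simp
  then show ?thesis
    using assms(1) by (simp add: koszul_diff_restrict fun_eq_iff)
qed

lemma in_ideal_of_koszul_diff_empty: "in_ideal_of y (koszul_diff y z {})"
  unfolding koszul_diff_empty by (intro in_ideal_of_sum in_ideal_of_mult_left in_ideal_of_generator)

section \<open>Exactness of the Koszul complex of the variables\<close>

definition var_exp :: "'n \<Rightarrow> ('n \<Rightarrow>\<^sub>0 nat)" where
  "var_exp i = Poly_Mapping.single i 1"

lemma lookup_Var_mult:
  "Poly_Mapping.lookup (Var i * p) \<alpha> =
     (if i \<in> Poly_Mapping.keys \<alpha> then Poly_Mapping.lookup p (\<alpha> - var_exp i) else 0)"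
proof -
  have shift: "\<alpha> = var_exp i + \<beta> \<longleftrightarrow> i \<in> Poly_Mapping.keys \<alpha> \<and> \<beta> = \<alpha> - var_exp i" for \<beta>
    by (auto simp: poly_mapping_eq_iff fun_eq_iff in_keys_iff lookup_add lookup_minus lookup_single var_exp_def when_def)
  have "Poly_Mapping.lookup (Var i * p) \<alpha> =
      (\<Sum>\<beta>. Poly_Mapping.lookup p \<beta> when \<alpha> = var_exp i + \<beta>)"
    by (simp add: lookup_mult Var_def lookup_single var_exp_def when_mult)
  also have "\<dots> = (\<Sum>\<beta>. Poly_Mapping.lookup p \<beta> when i \<in> Poly_Mapping.keys \<alpha> \<and> \<beta> = \<alpha> - var_exp i)"
    by (simp only: shift)
  finally show ?thesis
    by (cases "i \<in> Poly_Mapping.keys \<alpha>") (simp_all add: when_def)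
qed

lemma lookup_pos_sign_mult:
  "Poly_Mapping.lookup (pos_sign I i * p) \<alpha> = (-1) ^ card {j\<in>I. j < i} * Poly_Mapping.lookup p \<alpha>"
proof -
  have "Poly_Mapping.lookup ((-1) ^ m * p) \<alpha> = (-1) ^ m * Poly_Mapping.lookup p \<alpha>" for m
    by (induction m) (simp_all add: mult.assoc)
  then show ?thesis
    by (simp add: pos_sign_def)
qed

lemma lookup_koszul_diff_Var:
  "Poly_Mapping.lookup (koszul_diff Var z I) \<alpha> =
     (\<Sum>i\<in>Poly_Mapping.keys \<alpha> - I.
        (-1) ^ card {j\<in>I. j < i} * Poly_Mapping.lookup (z (insert i I)) (\<alpha> - var_exp i))"
proof -
  have "{j\<in>insert i I. j < i} = {j\<in>I. j < i}" for i
    by auto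
  then have "Poly_Mapping.lookup (koszul_diff Var z I) \<alpha> =
      (\<Sum>i\<in>-I. if i \<in> Poly_Mapping.keys \<alpha>
        then (-1) ^ card {j\<in>I. j < i} * Poly_Mapping.lookup (z (insert i I)) (\<alpha> - var_exp i) else 0)"
    unfolding koszul_diff_def lookup_sum
    by (intro sum.cong) (simp_all add: mult.assoc lookup_pos_sign_mult lookup_Var_mult)
  also have "\<dots> = (\<Sum>i\<in>{i\<in>-I. i \<in> Poly_Mapping.keys \<alpha>}.
        (-1) ^ card {j\<in>I. j < i} * Poly_Mapping.lookup (z (insert i I)) (\<alpha> - var_exp i))"
    by (rule sum.inter_filter[symmetric]) simp
  also have "{i\<in>-I. i \<in> Poly_Mapping.keys \<alpha>} = Poly_Mapping.keys \<alpha> - I"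
    by auto
  finally show ?thesis .
qed

text \<open>The standard contracting homotopy: it sends \<open>x\<^sup>\<beta> e\<^sub>I\<close> to \<open>x\<^bsup>\<beta> - e\<^sub>m\<^esup> e\<^bsub>I \<union> {m}\<^esub>\<close>,
  where \<open>m\<close> is the least variable occurring in \<open>x\<^sup>\<beta>\<close>, if \<open>m < Min I\<close>, and to \<open>0\<close> otherwise.\<close>

definition koszul_homotopy ::
    "('n::{finite,linorder} set \<Rightarrow> ('n, 'k::comm_ring_1) mpoly) \<Rightarrow> 'n set \<Rightarrow> ('n, 'k) mpoly" where
  "koszul_homotopy z J = (if J = {} then 0 else Abs_poly_mapping (\<lambda>\<alpha>.
     if \<forall>j\<in>Poly_Mapping.keys \<alpha>. Min J \<le> j
     then Poly_Mapping.lookup (z (J - {Min J})) (\<alpha> + var_exp (Min J)) else 0))"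

lemma lookup_koszul_homotopy:
  "Poly_Mapping.lookup (koszul_homotopy z J) \<alpha> =
     (if J \<noteq> {} \<and> (\<forall>j\<in>Poly_Mapping.keys \<alpha>. Min J \<le> j)
      then Poly_Mapping.lookup (z (J - {Min J})) (\<alpha> + var_exp (Min J)) else 0)"
proof (cases "J = {}")
  case False
  let ?m = "Min J"
  let ?f = "\<lambda>\<alpha>. if \<forall>j\<in>Poly_Mapping.keys \<alpha>. ?m \<le> j
     then Poly_Mapping.lookup (z (J - {?m})) (\<alpha> + var_exp ?m) else 0"
  have "{\<alpha>. ?f \<alpha> \<noteq> 0} \<subseteq> (\<lambda>\<beta>. \<beta> - var_exp ?m) ` Poly_Mapping.keys (z (J - {?m}))"
    by (auto simp: in_keys_iff intro!: image_eqI[where x = "_ + var_exp ?m"] split: if_splits)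
  then have "finite {\<alpha>. ?f \<alpha> \<noteq> 0}"
    by (rule finite_subset) simp
  then show ?thesis
    using False by (simp add: koszul_homotopy_def)
qed (simp add: koszul_homotopy_def)

lemma koszul_homotopy_0: "koszul_homotopy (\<lambda>_. 0) = (\<lambda>_. 0)"
  by (simp add: fun_eq_iff poly_mapping_eq_iff lookup_koszul_homotopy)

lemma koszul_homotopy_chain:
  fixes z :: "'n::{finite,linorder} set \<Rightarrow> ('n, 'k::comm_ring_1) mpoly"
  assumes "koszul_chain l z"
  shows "koszul_chain (Suc l) (koszul_homotopy z)"
  unfolding koszul_chain_def
proof (intro allI impI)
  fix J :: "'n set"
  assume "card J \<noteq> Suc l"
  then have "J \<noteq> {} \<Longrightarrow> card (J - {Min J}) \<noteq> l"
    by (metis Min_in card_Diff1_less card_Suc_Diff1 finite)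
  then have "J \<noteq> {} \<Longrightarrow> z (J - {Min J}) = 0"
    using assms by (simp add: koszul_chain_def)
  then show "koszul_homotopy z J = 0"
    by (auto simp: poly_mapping_eq_iff fun_eq_iff lookup_koszul_homotopy)
qed

lemma card_less_Diff_singleton:
  fixes J :: "'n::{finite,linorder} set"
  assumes "m \<in> J" and "m < i"
  shows "card {j\<in>J. j < i} = Suc (card {j\<in>J - {m}. j < i})"
proof -
  have "{j\<in>J - {m}. j < i} = {j\<in>J. j < i} - {m}"
    by auto
  moreover have "m \<in> {j\<in>J. j < i}"
    using assms by simp
  ultimately show ?thesis
    by (metis card_Suc_Diff1 finite)
qed

lemma keys_diff_var_exp: "Poly_Mapping.keys (\<alpha> - var_exp i) \<subseteq> Poly_Mapping.keys \<alpha>"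
  by (auto simp: in_keys_iff lookup_minus)

lemma add_var_exp_diff_var_exp:
  assumes "i \<in> Poly_Mapping.keys \<alpha>"
  shows "\<alpha> - var_exp i + var_exp m = \<alpha> + var_exp m - var_exp i"
  by (rule poly_mapping_eqI)
    (use assms in \<open>auto simp: in_keys_iff lookup_add lookup_minus lookup_single var_exp_def when_def\<close>)

lemma lookup_koszul_homotopy_insert:
  assumes "J \<noteq> {}" and min_le: "\<forall>j\<in>Poly_Mapping.keys \<alpha>. Min J \<le> j"
    and i: "i \<in> Poly_Mapping.keys \<alpha> - J"
  shows "Min J < i"
    and "Poly_Mapping.lookup (koszul_homotopy z (insert i J)) (\<alpha> - var_exp i) =
      Poly_Mapping.lookup (z (insert i (J - {Min J}))) (\<alpha> + var_exp (Min J) - var_exp i)"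
proof -
  have "Min J \<le> i" and "Min J \<in> J"
    using min_le i assms(1) by simp_all
  with i show "Min J < i"
    using le_neq_trans by blast
  then have "Min (insert i J) = Min J" and "insert i J - {Min J} = insert i (J - {Min J})"
    using assms(1) by auto
  moreover have "\<forall>j\<in>Poly_Mapping.keys (\<alpha> - var_exp i). Min J \<le> j"
    using min_le keys_diff_var_exp[of \<alpha> i] by auto
  ultimately have "Poly_Mapping.lookup (koszul_homotopy z (insert i J)) (\<alpha> - var_exp i) =
      Poly_Mapping.lookup (z (insert i (J - {Min J}))) (\<alpha> - var_exp i + var_exp (Min J))"
    by (simp add: lookup_koszul_homotopy)
  also have "\<alpha> - var_exp i + var_exp (Min J) = \<alpha> + var_exp (Min J) - var_exp i"
    using i by (intro add_var_exp_diff_var_exp) simp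
  finally show "Poly_Mapping.lookup (koszul_homotopy z (insert i J)) (\<alpha> - var_exp i) =
      Poly_Mapping.lookup (z (insert i (J - {Min J}))) (\<alpha> + var_exp (Min J) - var_exp i)" .
qed

lemma koszul_homotopy_identity_above:
  fixes z :: "'n::{finite,linorder} set \<Rightarrow> ('n, 'k::comm_ring_1) mpoly"
  assumes "J \<noteq> {}" and "\<forall>j\<in>Poly_Mapping.keys \<alpha>. Min J \<le> j"
  shows "Poly_Mapping.lookup (koszul_diff Var (koszul_homotopy z) J) \<alpha> +
      Poly_Mapping.lookup (koszul_homotopy (koszul_diff Var z) J) \<alpha> = Poly_Mapping.lookup (z J) \<alpha>"
proof -
  define m where "m = Min J"
  have "m \<in> J" and "\<forall>j\<in>J. m \<le> j"
    using assms(1) by (simp_all add: m_def)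
  define t where "t i = (-1) ^ card {j\<in>J - {m}. j < i} *
      Poly_Mapping.lookup (z (insert i (J - {m}))) (\<alpha> + var_exp m - var_exp i)" for i
  have "{j\<in>J - {m}. j < m} = {}" and "insert m (J - {m}) = J"
    using \<open>\<forall>j\<in>J. m \<le> j\<close> \<open>m \<in> J\<close> by auto
  then have t_m: "t m = Poly_Mapping.lookup (z J) \<alpha>"
    unfolding t_def by (simp only: card.empty power_0 mult_1 add_diff_cancel_right')
  have keys_shift: "Poly_Mapping.keys (\<alpha> + var_exp m) - (J - {m}) = insert m (Poly_Mapping.keys \<alpha> - J)"
    using \<open>m \<in> J\<close> by (auto simp: in_keys_iff lookup_add lookup_single var_exp_def)
  have "Poly_Mapping.lookup (koszul_homotopy (koszul_diff Var z) J) \<alpha> =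
      Poly_Mapping.lookup (koszul_diff Var z (J - {m})) (\<alpha> + var_exp m)"
    using assms by (simp add: lookup_koszul_homotopy m_def)
  also have "\<dots> = (\<Sum>i\<in>insert m (Poly_Mapping.keys \<alpha> - J). t i)"
    by (simp only: lookup_koszul_diff_Var keys_shift t_def)
  also have "\<dots> = Poly_Mapping.lookup (z J) \<alpha> + (\<Sum>i\<in>Poly_Mapping.keys \<alpha> - J. t i)"
    using \<open>m \<in> J\<close> t_m by simp
  moreover have "Poly_Mapping.lookup (koszul_diff Var (koszul_homotopy z) J) \<alpha> =
      (\<Sum>i\<in>Poly_Mapping.keys \<alpha> - J. - t i)"
    unfolding lookup_koszul_diff_Var
  proof (rule sum.cong[OF refl])
    fix i
    assume i: "i \<in> Poly_Mapping.keys \<alpha> - J"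
    show "(-1) ^ card {j\<in>J. j < i} *
        Poly_Mapping.lookup (koszul_homotopy z (insert i J)) (\<alpha> - var_exp i) = - t i"
      using lookup_koszul_homotopy_insert(1)[OF assms i] lookup_koszul_homotopy_insert(2)[OF assms i, of z]
        card_less_Diff_singleton[OF \<open>m \<in> J\<close>]
      by (simp add: t_def m_def)
  qed
  ultimately show ?thesis
    by (simp add: sum_negf)
qed

lemma lookup_koszul_homotopy_insert_eq_0:
  assumes less: "\<forall>j\<in>J. Min (Poly_Mapping.keys \<alpha>) < j"
    and "i \<in> Poly_Mapping.keys \<alpha>" and "Min (Poly_Mapping.keys \<alpha>) < i"
  shows "Poly_Mapping.lookup (koszul_homotopy z (insert i J)) (\<alpha> - var_exp i) = 0"
proof -
  let ?m = "Min (Poly_Mapping.keys \<alpha>)"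
  have "?m < Min (insert i J)"
    using assms by (simp add: Min_gr_iff)
  moreover have "?m \<in> Poly_Mapping.keys \<alpha>"
    using assms(2) by (intro Min_in) auto
  then have "?m \<in> Poly_Mapping.keys (\<alpha> - var_exp i)"
    using assms(3) by (simp add: in_keys_iff lookup_minus lookup_single var_exp_def)
  ultimately have "\<not> (\<forall>j\<in>Poly_Mapping.keys (\<alpha> - var_exp i). Min (insert i J) \<le> j)"
    by (meson leD)
  then show ?thesis
    by (auto simp: lookup_koszul_homotopy)
qed

lemma koszul_homotopy_identity_below:
  fixes z :: "'n::{finite,linorder} set \<Rightarrow> ('n, 'k::comm_ring_1) mpoly"
  assumes "\<alpha> \<noteq> 0" and less: "\<forall>j\<in>J. Min (Poly_Mapping.keys \<alpha>) < j"
  shows "Poly_Mapping.lookup (koszul_diff Var (koszul_homotopy z) J) \<alpha> = Poly_Mapping.lookup (z J) \<alpha>"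
proof -
  define m where "m = Min (Poly_Mapping.keys \<alpha>)"
  have "m \<in> Poly_Mapping.keys \<alpha>" and min_le: "\<forall>j\<in>Poly_Mapping.keys \<alpha>. m \<le> j"
    using assms(1) by (simp_all add: m_def)
  have "m \<notin> J"
    using less by (auto simp: m_def)
  have vanish: "Poly_Mapping.lookup (koszul_homotopy z (insert i J)) (\<alpha> - var_exp i) = 0"
    if "i \<in> Poly_Mapping.keys \<alpha> - J" and "i \<noteq> m" for i
  proof -
    have "m < i"
      using that min_le by (metis DiffD1 le_neq_trans)
    with that show ?thesis
      by (intro lookup_koszul_homotopy_insert_eq_0[OF less]) (simp_all add: m_def)
  qed
  have "Min (insert m J) = m"
    using less by (auto simp: m_def intro!: Min_eqI)
  moreover have "\<forall>j\<in>Poly_Mapping.keys (\<alpha> - var_exp m). m \<le> j"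
    using min_le keys_diff_var_exp[of \<alpha> m] by auto
  moreover have "insert m J - {m} = J"
    using \<open>m \<notin> J\<close> by auto
  moreover have "\<alpha> - var_exp m + var_exp m = \<alpha>"
    by (rule poly_mapping_eqI)
      (use \<open>m \<in> Poly_Mapping.keys \<alpha>\<close> in \<open>auto simp: in_keys_iff lookup_add lookup_minus lookup_single var_exp_def when_def\<close>)
  ultimately have "Poly_Mapping.lookup (koszul_homotopy z (insert m J)) (\<alpha> - var_exp m) =
      Poly_Mapping.lookup (z J) \<alpha>"
    by (simp add: lookup_koszul_homotopy)
  moreover have "card {j\<in>J. j < m} = 0"
    using less by (auto simp: m_def)
  ultimately have main_term: "(-1) ^ card {j\<in>J. j < m} *
      Poly_Mapping.lookup (koszul_homotopy z (insert m J)) (\<alpha> - var_exp m) = Poly_Mapping.lookup (z J) \<alpha>"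
    by (simp only: power_0 mult_1)
  have "m \<in> Poly_Mapping.keys \<alpha> - J"
    using \<open>m \<in> Poly_Mapping.keys \<alpha>\<close> \<open>m \<notin> J\<close> by simp
  then show ?thesis
    unfolding lookup_koszul_diff_Var
    by (simp add: sum.remove[of _ m] main_term vanish)
qed

lemma Min_keys_cases:
  fixes J :: "'n::{finite,linorder} set" and \<alpha> :: "'n \<Rightarrow>\<^sub>0 nat"
  obtains "J \<noteq> {}" and "\<forall>j\<in>Poly_Mapping.keys \<alpha>. Min J \<le> j"
    | "\<alpha> = 0" and "J = {}"
    | "\<alpha> \<noteq> 0" and "\<forall>j\<in>J. Min (Poly_Mapping.keys \<alpha>) < j"
proof (cases "\<alpha> = 0")
  case False
  have "Min (Poly_Mapping.keys \<alpha>) < j"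
    if "j \<in> J" and not_above: "\<not> (\<forall>j\<in>Poly_Mapping.keys \<alpha>. Min J \<le> j)" for j
  proof -
    obtain j' where "j' \<in> Poly_Mapping.keys \<alpha>" and "j' < Min J"
      using not_above by (auto simp: not_le)
    moreover have "Min (Poly_Mapping.keys \<alpha>) \<le> j'" and "Min J \<le> j"
      using \<open>j' \<in> Poly_Mapping.keys \<alpha>\<close> \<open>j \<in> J\<close> by (auto intro: Min_le)
    ultimately show ?thesis
      by (meson le_less_trans less_le_trans)
  qed
  with False that show thesis
    by blast
qed (use that in auto)

lemma koszul_exact_Var: "koszul_exact (Var :: 'n::{finite,linorder} \<Rightarrow> ('n, 'k::comm_ring_1) mpoly)"
  unfolding koszul_exact_def
proof (intro allI impI, elim conjE)
  fix l and z :: "'n set \<Rightarrow> ('n, 'k) mpoly"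
  assume "1 \<le> l" and chain: "koszul_chain l z" and cycle: "koszul_diff Var z = (\<lambda>_. 0)"
  have "Poly_Mapping.lookup (koszul_diff Var (koszul_homotopy z) J) \<alpha> = Poly_Mapping.lookup (z J) \<alpha>"
    for J \<alpha>
  proof (cases rule: Min_keys_cases[of J \<alpha>])
    case 1
    then show ?thesis
      using koszul_homotopy_identity_above[of J \<alpha> z] by (simp add: cycle koszul_homotopy_0)
  next
    case 2
    moreover have "z {} = 0"
      using chain \<open>1 \<le> l\<close> by (simp add: koszul_chain_def)
    ultimately show ?thesis
      by (simp add: lookup_koszul_diff_Var)
  next
    case 3
    then show ?thesis
      by (rule koszul_homotopy_identity_below)
  qed
  then show "\<exists>w. koszul_chain (Suc l) w \<and> koszul_diff Var w = z"
    using koszul_homotopy_chain[OF chain] by (auto simp: fun_eq_iff poly_mapping_eq_iff)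
qed

section \<open>Flat base change\<close>

lemma flat_endo_relation:
  fixes \<phi> :: "'a::comm_ring_1 \<Rightarrow> 'a" and f g :: "'i \<Rightarrow> 'a"
  assumes "flat_endo \<phi>" and "finite A" and "(\<Sum>i\<in>A. \<phi> (f i) * g i) = 0"
  obtains k :: nat and a :: "'i \<Rightarrow> nat \<Rightarrow> 'a" and h :: "nat \<Rightarrow> 'a"
  where "\<forall>i\<in>A. g i = (\<Sum>j<k. \<phi> (a i j) * h j)" and "\<forall>j<k. (\<Sum>i\<in>A. f i * a i j) = 0"
proof -
  obtain e where e: "bij_betw e {..<card A} A"
    using ex_bij_betw_nat_finite[OF assms(2)] by (auto simp: atLeast0LessThan)
  have "(\<Sum>i<card A. \<phi> (f (e i)) * g (e i)) = 0"
    using assms(3) sum.reindex_bij_betw[OF e, of "\<lambda>i. \<phi> (f i) * g i"] by simp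
  from assms(1)[unfolded flat_endo_def, rule_format, OF this]
  obtain k :: nat and a h where g: "\<forall>i<card A. g (e i) = (\<Sum>j<k. \<phi> (a i j) * h j)"
    and rel: "\<forall>j<k. (\<Sum>i<card A. f (e i) * a i j) = 0"
    by blast
  define a' where "a' i j = a (the_inv_into {..<card A} e i) j" for i j
  have inv: "the_inv_into {..<card A} e i < card A" and e_inv: "e (the_inv_into {..<card A} e i) = i"
    if "i \<in> A" for i
    using that bij_betw_apply[OF bij_betw_the_inv_into[OF e]] f_the_inv_into_f_bij_betw[OF e]
    by auto
  have "\<forall>i\<in>A. g i = (\<Sum>j<k. \<phi> (a' i j) * h j)"
  proof
    fix i
    assume "i \<in> A"
    then show "g i = (\<Sum>j<k. \<phi> (a' i j) * h j)"
      using g[rule_format, OF inv[OF \<open>i \<in> A\<close>]] e_inv[OF \<open>i \<in> A\<close>] by (simp add: a'_def)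
  qed
  moreover have "(\<Sum>i\<in>A. f i * a' i j) = (\<Sum>i<card A. f (e i) * a i j)" for j
    using sum.reindex_bij_betw[OF e, of "\<lambda>i. f i * a' i j"] e
    by (simp add: a'_def bij_betw_def the_inv_into_f_f)
  ultimately show thesis
    using rel by (intro that[of a' h k]) auto
qed

lemma alg_endo_sum_comp:
  assumes "alg_endo \<phi>"
  shows "(\<Sum>j\<in>J. \<phi> (a j) * (\<Sum>t\<in>T. \<phi> (b j t) * h t)) = (\<Sum>t\<in>T. \<phi> (\<Sum>j\<in>J. a j * b j t) * h t)"
proof -
  have "(\<Sum>j\<in>J. \<phi> (a j) * (\<Sum>t\<in>T. \<phi> (b j t) * h t)) = (\<Sum>j\<in>J. \<Sum>t\<in>T. \<phi> (a j * b j t) * h t)"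
    by (simp add: alg_endo_mult[OF assms] sum_distrib_left mult.assoc)
  also have "\<dots> = (\<Sum>t\<in>T. \<phi> (\<Sum>j\<in>J. a j * b j t) * h t)"
    by (subst sum.swap) (simp add: alg_endo_sum[OF assms] sum_distrib_right)
  finally show ?thesis .
qed

lemma flat_endo_relations:
  fixes \<phi> :: "('n, 'k::comm_ring_1) mpoly \<Rightarrow> ('n, 'k) mpoly"
    and M :: "'r \<Rightarrow> 'i \<Rightarrow> ('n, 'k) mpoly"
  assumes "alg_endo \<phi>" and "flat_endo \<phi>" and "finite A" and "finite R"
    and "\<forall>r\<in>R. (\<Sum>i\<in>A. \<phi> (M r i) * g i) = 0"
  shows "\<exists>(k::nat) a h. (\<forall>i\<in>A. g i = (\<Sum>j<k. \<phi> (a i j) * h j)) \<and>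
           (\<forall>r\<in>R. \<forall>j<k. (\<Sum>i\<in>A. M r i * a i j) = 0)"
  using assms(4,5)
proof (induction R rule: finite_induct)
  case empty
  have "(\<Sum>i\<in>A. \<phi> 0 * g i) = 0"
    by (simp add: alg_endo_zero[OF assms(1)])
  then show ?case
    by (rule flat_endo_relation[OF assms(2,3)]) blast
next
  case (insert r R)
  then obtain k :: nat and a h where g: "\<forall>i\<in>A. g i = (\<Sum>j<k. \<phi> (a i j) * h j)"
    and rel: "\<forall>r\<in>R. \<forall>j<k. (\<Sum>i\<in>A. M r i * a i j) = 0"
    by auto
  have "(\<Sum>j<k. \<phi> (\<Sum>i\<in>A. M r i * a i j) * h j) = (\<Sum>i\<in>A. \<phi> (M r i) * g i)"
    using g by (simp add: alg_endo_sum_comp[OF assms(1)])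
  also have "\<dots> = 0"
    using insert.prems by simp
  finally obtain k' :: nat and b h' where h: "\<forall>j\<in>{..<k}. h j = (\<Sum>t<k'. \<phi> (b j t) * h' t)"
    and rel': "\<forall>t<k'. (\<Sum>j<k. (\<Sum>i\<in>A. M r i * a i j) * b j t) = 0"
    by (rule flat_endo_relation[OF assms(2) finite_lessThan]) blast
  define a' where "a' i t = (\<Sum>j<k. a i j * b j t)" for i t
  have "\<forall>i\<in>A. g i = (\<Sum>t<k'. \<phi> (a' i t) * h' t)"
    using g h by (simp add: a'_def alg_endo_sum_comp[OF assms(1)])
  moreover have "(\<Sum>i\<in>A. M r' i * a' i t) = (\<Sum>j<k. (\<Sum>i\<in>A. M r' i * a i j) * b j t)" for r' t
    by (simp add: a'_def sum_distrib_left sum_distrib_right mult.assoc) (rule sum.swap)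
  ultimately show ?case
    using rel rel' by (intro exI[of _ k'] exI[of _ a'] exI[of _ h']) auto
qed

definition koszul_matrix ::
    "('n::{finite,linorder} \<Rightarrow> ('n, 'k::comm_ring_1) mpoly) \<Rightarrow> 'n set \<Rightarrow> 'n set \<Rightarrow> ('n, 'k) mpoly" where
  "koszul_matrix y J I = (\<Sum>i\<in>-J. if I = insert i J then pos_sign I i * y i else 0)"

lemma koszul_diff_eq_matrix: "koszul_diff y z J = (\<Sum>I\<in>UNIV. koszul_matrix y J I * z I)"
proof -
  have "(\<Sum>I\<in>UNIV. koszul_matrix y J I * z I) =
      (\<Sum>i\<in>-J. \<Sum>I\<in>UNIV. if I = insert i J then pos_sign I i * y i * z I else 0)"
    unfolding koszul_matrix_def sum_distrib_right by (subst sum.swap) (intro sum.cong refl, simp)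
  then show ?thesis
    by (simp add: koszul_diff_def)
qed

lemma koszul_matrix_alg_endo:
  assumes "alg_endo \<phi>"
  shows "\<phi> (koszul_matrix y J I) = koszul_matrix (\<lambda>i. \<phi> (y i)) J I"
  unfolding koszul_matrix_def
  by (simp add: alg_endo_sum[OF assms] alg_endo_mult[OF assms] alg_endo_pos_sign[OF assms]
      alg_endo_zero[OF assms] if_distrib cong: if_cong)

lemma koszul_diff_alg_endo_combination:
  assumes "alg_endo \<phi>"
  shows "koszul_diff (\<lambda>i. \<phi> (y i)) (\<lambda>I. \<Sum>j<k. \<phi> (W j I) * h j) J =
    (\<Sum>j<k. \<phi> (koszul_diff y (W j) J) * h j)"
  unfolding koszul_diff_def
  by (simp add: alg_endo_sum[OF assms] alg_endo_mult[OF assms] alg_endo_pos_sign[OF assms]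
      sum_distrib_left sum_distrib_right mult.assoc sum.swap[of _ "-J"])

lemma koszul_exact_alg_endo:
  fixes y :: "'n::{finite,linorder} \<Rightarrow> ('n, 'k::comm_ring_1) mpoly"
  assumes endo: "alg_endo \<phi>" and flat: "flat_endo \<phi>" and exact: "koszul_exact y"
  shows "koszul_exact (\<lambda>i. \<phi> (y i))"
  unfolding koszul_exact_def
proof (intro allI impI, elim conjE)
  fix l and z :: "'n set \<Rightarrow> ('n, 'k) mpoly"
  assume "1 \<le> l" and chain: "koszul_chain l z" and cycle: "koszul_diff (\<lambda>i. \<phi> (y i)) z = (\<lambda>_. 0)"
  have "\<forall>J\<in>UNIV. (\<Sum>I\<in>UNIV. \<phi> (koszul_matrix y J I) * z I) = 0"
    using cycle by (simp add: koszul_matrix_alg_endo[OF endo] koszul_diff_eq_matrix fun_eq_iff)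
  from flat_endo_relations[OF endo flat finite finite this]
  obtain k :: nat and a h where z: "\<forall>I\<in>UNIV. z I = (\<Sum>j<k. \<phi> (a I j) * h j)"
    and rel: "\<forall>J\<in>UNIV. \<forall>j<k. (\<Sum>I\<in>UNIV. koszul_matrix y J I * a I j) = 0"
    by blast
  define c where "c j = (\<lambda>I. if card I = l then a I j else 0)" for j
  have "\<exists>w. koszul_chain (Suc l) w \<and> koszul_diff y w = c j" if "j < k" for j
  proof (rule koszul_exactD[OF exact \<open>1 \<le> l\<close>])
    show "koszul_chain l (c j)"
      by (simp add: koszul_chain_def c_def)
    have "koszul_diff y (\<lambda>I. a I j) = (\<lambda>_. 0)"
      using rel that by (simp add: koszul_diff_eq_matrix fun_eq_iff)
    then show "koszul_diff y (c j) = (\<lambda>_. 0)"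
      unfolding c_def using \<open>1 \<le> l\<close> by (rule koszul_cycle_restrict)
  qed blast
  then obtain W where W: "\<forall>j\<in>{..<k}. koszul_chain (Suc l) (W j) \<and> koszul_diff y (W j) = c j"
    using bchoice[of "{..<k}"] by (metis lessThan_iff)
  define w where "w = (\<lambda>I. \<Sum>j<k. \<phi> (W j I) * h j)"
  have "koszul_chain (Suc l) w"
    using W by (simp add: koszul_chain_def w_def alg_endo_zero[OF endo])
  moreover have "koszul_diff (\<lambda>i. \<phi> (y i)) w = z"
  proof
    fix J
    have "koszul_diff (\<lambda>i. \<phi> (y i)) w J = (\<Sum>j<k. \<phi> (koszul_diff y (W j) J) * h j)"
      by (simp add: w_def koszul_diff_alg_endo_combination[OF endo])
    also have "\<dots> = (\<Sum>j<k. \<phi> (c j J) * h j)"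
      using W by (intro sum.cong) auto
    also have "\<dots> = z J"
      using z chain
      by (cases "card J = l") (simp_all add: c_def koszul_chain_def alg_endo_zero[OF endo])
    finally show "koszul_diff (\<lambda>i. \<phi> (y i)) w J = z J" .
  qed
  ultimately show "\<exists>w. koszul_chain (Suc l) w \<and> koszul_diff (\<lambda>i. \<phi> (y i)) w = z"
    by blast
qed

definition iterated_Var ::
    "(('n, 'k::comm_ring_1) mpoly \<Rightarrow> ('n, 'k) mpoly) \<Rightarrow> nat \<Rightarrow> 'n \<Rightarrow> ('n, 'k) mpoly" where
  "iterated_Var \<phi> k = (\<lambda>i. (\<phi> ^^ k) (Var i))"

lemma koszul_exact_iterated_Var:
  assumes "alg_endo \<phi>" and "flat_endo \<phi>"
  shows "koszul_exact (iterated_Var \<phi> k)"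
proof (induction k)
  case 0
  show ?case
    using koszul_exact_Var by (simp add: iterated_Var_def)
next
  case (Suc k)
  then show ?case
    using koszul_exact_alg_endo[OF assms] by (simp add: iterated_Var_def)
qed

section \<open>The skew polynomial ring\<close>

lemma lookup_skmult:
  assumes "alg_endo \<phi>"
  shows "Poly_Mapping.lookup (skmult \<phi> f g) n =
    (\<Sum>i\<le>n. Poly_Mapping.lookup f i * (\<phi> ^^ i) (Poly_Mapping.lookup g (n - i)))"
proof -
  define t where "t i j = Poly_Mapping.lookup f i * (\<phi> ^^ i) (Poly_Mapping.lookup g j)" for i j
  have t_0: "t i j = 0" if "i \<notin> Poly_Mapping.keys f \<or> j \<notin> Poly_Mapping.keys g" for i j
    using that alg_endo_zero[OF alg_endo_funpow[OF assms]] by (auto simp: t_def in_keys_iff)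
  have "Poly_Mapping.lookup (skmult \<phi> f g) n =
      (\<Sum>i\<in>Poly_Mapping.keys f. \<Sum>j\<in>Poly_Mapping.keys g. if j = n - i \<and> i \<le> n then t i j else 0)"
    unfolding skmult_def t_def lookup_sum lookup_single
    by (intro sum.cong refl) (auto simp: when_def)
  also have "\<dots> = (\<Sum>i\<in>Poly_Mapping.keys f. if i \<le> n then t i (n - i) else 0)"
    using t_0 by (intro sum.cong refl) (auto simp: sum.delta_remove)
  also have "\<dots> = (\<Sum>i\<le>n. t i (n - i))"
    using t_0 by (intro sum.mono_neutral_cong) auto
  finally show ?thesis
    by (simp add: t_def)
qed

lemma skmult_0_right: "skmult \<phi> f 0 = 0"
  by (simp add: skmult_def)

context
  fixes \<phi> :: "('n, 'k::comm_ring_1) mpoly \<Rightarrow> ('n, 'k) mpoly"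
  assumes endo: "alg_endo \<phi>"
begin

lemma skmult_add_right: "skmult \<phi> f (g + h) = skmult \<phi> f g + skmult \<phi> f h"
  by (rule poly_mapping_eqI)
    (simp add: lookup_skmult[OF endo] lookup_add alg_endo_add[OF alg_endo_funpow[OF endo]]
      distrib_left sum.distrib)

lemma skmult_uminus_right: "skmult \<phi> f (- g) = - skmult \<phi> f g"
  using skmult_add_right[of f "- g" g] by (simp add: skmult_0_right eq_neg_iff_add_eq_0)

lemma skmult_diff_right: "skmult \<phi> f (g - h) = skmult \<phi> f g - skmult \<phi> f h"
  using skmult_add_right[of f g "- h"] by (simp add: skmult_uminus_right)

lemma skmult_sum_right: "skmult \<phi> f (\<Sum>x\<in>A. g x) = (\<Sum>x\<in>A. skmult \<phi> f (g x))"
  by (induction A rule: infinite_finite_induct) (simp_all add: skmult_0_right skmult_add_right)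

lemma lookup_skmult_emb: "Poly_Mapping.lookup (skmult \<phi> f (emb p)) n = Poly_Mapping.lookup f n * (\<phi> ^^ n) p"
proof -
  have "Poly_Mapping.lookup (skmult \<phi> f (emb p)) n =
      (\<Sum>i\<le>n. if i = n then Poly_Mapping.lookup f i * (\<phi> ^^ i) p else 0)"
    unfolding lookup_skmult[OF endo]
    by (intro sum.cong refl) (auto simp: emb_def lookup_single alg_endo_zero[OF alg_endo_funpow[OF endo]])
  then show ?thesis
    by simp
qed

lemma lookup_skmult_Theta:
  "Poly_Mapping.lookup (skmult \<phi> f Theta) n = (case n of 0 \<Rightarrow> 0 | Suc m \<Rightarrow> Poly_Mapping.lookup f m)"
proof -
  have "Poly_Mapping.lookup (skmult \<phi> f Theta) n =
      (\<Sum>i\<le>n. if Suc i = n then Poly_Mapping.lookup f i else 0)"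
    unfolding lookup_skmult[OF endo]
    by (intro sum.cong refl)
      (auto simp: Theta_def lookup_single alg_endo_zero[OF alg_endo_funpow[OF endo]]
        alg_endo_one[OF alg_endo_funpow[OF endo]])
  then show ?thesis
    by (cases n) simp_all
qed

end

section \<open>The differential by powers of Theta\<close>

definition theta_coeffs ::
    "('n set \<times> bool \<Rightarrow> ('n, 'k::comm_ring_1) skew) \<Rightarrow> bool \<Rightarrow> nat \<Rightarrow> 'n set \<Rightarrow> ('n, 'k) mpoly" where
  "theta_coeffs c t k = (\<lambda>I. Poly_Mapping.lookup (c (I, t)) k)"

text \<open>\<open>cone_map \<phi> s b k\<close> is the coefficient of \<open>\<Theta>\<^sup>k\<close> in the image of
  \<open>\<Sum>\<^sub>j \<Sum>\<^sub>J b j J \<Theta>\<^sup>j e\<^sub>J \<and> u\<close> under \<open>e\<^sub>J \<and> u \<mapsto> \<plusminus>(\<Theta> - s\<^sub>J) e\<^sub>J\<close>.\<close>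

definition cone_map ::
    "(('n, 'k::comm_ring_1) mpoly \<Rightarrow> ('n, 'k) mpoly) \<Rightarrow> ('n \<Rightarrow> ('n, 'k) mpoly) \<Rightarrow>
     (nat \<Rightarrow> 'n set \<Rightarrow> ('n, 'k) mpoly) \<Rightarrow> nat \<Rightarrow> 'n set \<Rightarrow> ('n, 'k) mpoly" where
  "cone_map \<phi> s b k I =
     (-1) ^ card I * ((case k of 0 \<Rightarrow> 0 | Suc j \<Rightarrow> b j I) - b k I * (\<phi> ^^ k) (\<Prod>i\<in>I. s i))"

lemma sum_remove_eq_sum_insert:
  fixes F :: "'n::finite set \<Rightarrow> 'n \<Rightarrow> 'a::comm_monoid_add"
  shows "(\<Sum>I\<in>UNIV. \<Sum>i\<in>I. if J = I - {i} then F I i else 0) = (\<Sum>i\<in>-J. F (insert i J) i)"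
proof -
  have restrict: "(\<Sum>i\<in>I. if J = I - {i} then F I i else 0) =
      (\<Sum>i\<in>UNIV. if i \<in> I then if J = I - {i} then F I i else 0 else 0)" for I
    by (simp add: sum.If_cases)
  have "(\<Sum>I\<in>UNIV. \<Sum>i\<in>I. if J = I - {i} then F I i else 0) =
      (\<Sum>i\<in>UNIV. \<Sum>I\<in>UNIV. if i \<in> I then if J = I - {i} then F I i else 0 else 0)"
    unfolding restrict by (rule sum.swap)
  also have "\<dots> = (\<Sum>i\<in>UNIV. if i \<in> -J then F (insert i J) i else 0)"
  proof (rule sum.cong[OF refl])
    fix i
    have "(\<Sum>I\<in>UNIV. if i \<in> I then if J = I - {i} then F I i else 0 else 0) =
        (\<Sum>I\<in>UNIV. if i \<in> -J then if I = insert i J then F I i else 0 else 0)"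
      by (rule sum.cong) auto
    then show "(\<Sum>I\<in>UNIV. if i \<in> I then if J = I - {i} then F I i else 0 else 0) =
        (if i \<in> -J then F (insert i J) i else 0)"
      by simp
  qed
  also have "\<dots> = (\<Sum>i\<in>-J. F (insert i J) i)"
    by (simp add: sum.If_cases Compl_eq)
  finally show ?thesis .
qed

lemma sum_UNIV_pair_bool:
  "(\<Sum>B\<in>UNIV. g B) = (\<Sum>I\<in>UNIV. g (I, False)) + (\<Sum>I\<in>UNIV. g (I, True))"
proof -
  have "(\<Sum>B\<in>UNIV. g B) = (\<Sum>I\<in>UNIV. \<Sum>t\<in>UNIV. g (I, t))"
    by (simp add: sum.cartesian_product split_def)
  then show ?thesis
    by (simp add: UNIV_bool sum.distrib add.commute)
qed

lemma sum_lookup_skmult_boundary: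
  assumes "alg_endo \<phi>"
  shows "(\<Sum>I\<in>UNIV. Poly_Mapping.lookup
      (skmult \<phi> (f I) (\<Sum>i\<in>I. if J = I - {i} then emb (pos_sign I i * q i) else 0)) k) =
    koszul_diff (\<lambda>i. (\<phi> ^^ k) (q i)) (\<lambda>I. Poly_Mapping.lookup (f I) k) J"
proof -
  have "Poly_Mapping.lookup
      (skmult \<phi> (f I) (\<Sum>i\<in>I. if J = I - {i} then emb (pos_sign I i * q i) else 0)) k =
    (\<Sum>i\<in>I. if J = I - {i} then pos_sign I i * (\<phi> ^^ k) (q i) * Poly_Mapping.lookup (f I) k else 0)" for I
    unfolding skmult_sum_right[OF assms] lookup_sum
    by (intro sum.cong refl)
      (simp add: skmult_0_right lookup_skmult_emb[OF assms] alg_endo_mult[OF alg_endo_funpow[OF assms]]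
        alg_endo_pos_sign[OF alg_endo_funpow[OF assms]] mult_ac)
  then show ?thesis
    by (simp add: sum_remove_eq_sum_insert koszul_diff_def)
qed

lemma lookup_dd_False:
  assumes "alg_endo \<phi>"
  shows "Poly_Mapping.lookup (dd \<phi> s c (J, False)) k =
    koszul_diff (iterated_Var \<phi> k) (theta_coeffs c False k) J + cone_map \<phi> s (theta_coeffs c True) k J"
proof -
  have "(\<Sum>I\<in>UNIV. Poly_Mapping.lookup (skmult \<phi> (c (I, False)) (bd \<phi> s (I, False) (J, False))) k) =
      koszul_diff (iterated_Var \<phi> k) (theta_coeffs c False k) J"
    by (simp add: sum_lookup_skmult_boundary[OF assms] theta_coeffs_def iterated_Var_def)
  moreover have "Poly_Mapping.lookup (skmult \<phi> (c (I, True)) (bd \<phi> s (I, True) (J, False))) k =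
      (if I = J then cone_map \<phi> s (theta_coeffs c True) k J else 0)" for I
    by (cases k)
      (auto simp: skmult_0_right skmult_uminus_right[OF assms] skmult_diff_right[OF assms]
        lookup_minus lookup_skmult_Theta[OF assms] lookup_skmult_emb[OF assms] cone_map_def
        theta_coeffs_def minus_one_power_iff)
  ultimately show ?thesis
    unfolding dd_def lookup_sum sum_UNIV_pair_bool by (simp add: lookup_add lookup_sum)
qed

lemma lookup_dd_True:
  assumes "alg_endo \<phi>"
  shows "Poly_Mapping.lookup (dd \<phi> s c (J, True)) k =
    koszul_diff (iterated_Var \<phi> (Suc k)) (theta_coeffs c True k) J"
proof -
  have "Poly_Mapping.lookup (dd \<phi> s c (J, True)) k =
      koszul_diff (\<lambda>i. (\<phi> ^^ k) (\<phi> (Var i))) (theta_coeffs c True k) J"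
    unfolding dd_def lookup_sum sum_UNIV_pair_bool
    by (simp add: skmult_0_right lookup_add lookup_sum sum_lookup_skmult_boundary[OF assms]
        theta_coeffs_def)
  also have "(\<lambda>i. (\<phi> ^^ k) (\<phi> (Var i))) = iterated_Var \<phi> (Suc k)"
    by (simp add: iterated_Var_def funpow_swap1)
  finally show ?thesis .
qed

section \<open>Exactness in positive degrees\<close>

lemma iterated_Var_Suc:
  assumes "alg_endo \<phi>" and "\<forall>i. \<phi> (Var i) = s i * Var i"
  shows "iterated_Var \<phi> (Suc k) i = (\<phi> ^^ k) (s i) * iterated_Var \<phi> k i"
proof -
  have "iterated_Var \<phi> (Suc k) i = (\<phi> ^^ k) (\<phi> (Var i))"
    by (simp add: iterated_Var_def funpow_swap1)
  then show ?thesis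
    using assms by (simp add: iterated_Var_def alg_endo_mult[OF alg_endo_funpow[OF assms(1)]])
qed

lemma koszul_diff_sign:
  "koszul_diff y (\<lambda>I. (-1) ^ card I * f I) J = - ((-1) ^ card J * koszul_diff y f J)"
  unfolding koszul_diff_def sum_distrib_left sum_negf[symmetric]
  by (intro sum.cong refl) (simp add: mult_ac)

lemma koszul_diff_mult_prod:
  assumes "alg_endo \<phi>" and "\<forall>i. \<phi> (Var i) = s i * Var i"
  shows "koszul_diff (iterated_Var \<phi> k) (\<lambda>I. \<beta> I * (\<phi> ^^ k) (\<Prod>i\<in>I. s i)) J =
    (\<phi> ^^ k) (\<Prod>i\<in>J. s i) * koszul_diff (iterated_Var \<phi> (Suc k)) \<beta> J"
  unfolding koszul_diff_def sum_distrib_left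
  by (intro sum.cong refl)
    (simp add: iterated_Var_Suc[OF assms] alg_endo_mult[OF alg_endo_funpow[OF assms(1)]] mult_ac)

lemma koszul_diff_cone_map:
  assumes "alg_endo \<phi>" and "\<forall>i. \<phi> (Var i) = s i * Var i"
  shows "koszul_diff (iterated_Var \<phi> k) (cone_map \<phi> s B k) J =
    - cone_map \<phi> s (\<lambda>j. koszul_diff (iterated_Var \<phi> (Suc j)) (B j)) k J"
proof -
  define B' where "B' = (case k of 0 \<Rightarrow> (\<lambda>_. 0) | Suc j \<Rightarrow> B j)"
  have "cone_map \<phi> s B k = (\<lambda>I. (-1) ^ card I * (B' I - B k I * (\<phi> ^^ k) (\<Prod>i\<in>I. s i)))"
    by (simp add: cone_map_def B'_def fun_eq_iff split: nat.split)
  then have "koszul_diff (iterated_Var \<phi> k) (cone_map \<phi> s B k) J =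
      - ((-1) ^ card J * (koszul_diff (iterated_Var \<phi> k) B' J -
        (\<phi> ^^ k) (\<Prod>i\<in>J. s i) * koszul_diff (iterated_Var \<phi> (Suc k)) (B k) J))"
    by (simp only: koszul_diff_sign koszul_diff_diff koszul_diff_mult_prod[OF assms])
  moreover have "koszul_diff (iterated_Var \<phi> k) B' J =
      (case k of 0 \<Rightarrow> 0 | Suc j \<Rightarrow> koszul_diff (iterated_Var \<phi> (Suc j)) (B j) J)"
    by (simp add: B'_def koszul_diff_0 split: nat.split)
  ultimately show ?thesis
    by (simp add: cone_map_def mult.commute)
qed

lemma koszul_boundary_degree_0:
  assumes "in_ideal_of y (b {})" and "koszul_chain 0 b"
  shows "\<exists>\<beta>. koszul_chain 1 \<beta> \<and> koszul_diff y \<beta> = b"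
proof -
  obtain c where c: "b {} = (\<Sum>i\<in>UNIV. c i * y i)"
    using assms(1) by (auto simp: in_ideal_of_def)
  define \<beta> where "\<beta> = (\<lambda>I. if card I = Suc 0 then c (the_elem I) else 0)"
  have "koszul_chain 1 \<beta>"
    by (simp add: koszul_chain_def \<beta>_def)
  moreover have "koszul_diff y \<beta> J = b J" for J
  proof (cases "J = {}")
    case True
    then show ?thesis
      by (simp add: koszul_diff_empty \<beta>_def c)
  next
    case False
    then show ?thesis
      using assms(2) by (simp add: \<beta>_def koszul_diff_restrict koszul_chain_def)
  qed
  ultimately show ?thesis
    by blast
qed

lemma u_coeff_empty_in_ideal:
  assumes endo: "alg_endo \<phi>" and s_def: "\<forall>i. \<phi> (Var i) = s i * Var i"
    and vanish: "\<forall>k\<ge>K. b k {} = 0"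
    and rel: "\<forall>k. koszul_diff (iterated_Var \<phi> k) (a k) {} + cone_map \<phi> s b k {} = 0"
  shows "in_ideal_of (iterated_Var \<phi> (Suc k)) (b k {})"
proof (cases "K \<le> k")
  case True
  then show ?thesis
    using vanish by (simp add: in_ideal_of_0)
next
  case False
  then have "k \<le> K"
    by simp
  then show ?thesis
  proof (induction k rule: inc_induct)
    case base
    then show ?case
      using vanish by (simp add: in_ideal_of_0)
  next
    case (step k)
    have "b k {} = b (Suc k) {} - koszul_diff (iterated_Var \<phi> (Suc k)) (a (Suc k)) {}"
      using rel[rule_format, of "Suc k"]
      by (simp add: cone_map_def alg_endo_one[OF alg_endo_funpow[OF endo]] algebra_simps
          del: funpow.simps)
    moreover have "in_ideal_of (iterated_Var \<phi> (Suc k)) (iterated_Var \<phi> (Suc (Suc k)) i)" for i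
      unfolding iterated_Var_Suc[OF endo s_def, of "Suc k"]
      by (intro in_ideal_of_mult_left in_ideal_of_generator)
    then have "in_ideal_of (iterated_Var \<phi> (Suc k)) (b (Suc k) {})"
      using step.IH by (rule in_ideal_of_trans)
    ultimately show ?case
      by (metis in_ideal_of_diff in_ideal_of_koszul_diff_empty)
  qed
qed

lemma lift_u_coeffs:
  assumes endo: "alg_endo \<phi>" and flat: "flat_endo \<phi>" and s_def: "\<forall>i. \<phi> (Var i) = s i * Var i"
    and "1 \<le> l"
    and b_chain: "\<forall>k. koszul_chain (l - 1) (b k)"
    and b_cycle: "\<forall>k. koszul_diff (iterated_Var \<phi> (Suc k)) (b k) = (\<lambda>_. 0)"
    and b_vanish: "\<forall>k\<ge>K. b k = (\<lambda>_. 0)"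
    and rel: "\<forall>k I. koszul_diff (iterated_Var \<phi> k) (a k) I + cone_map \<phi> s b k I = 0"
  obtains B where "\<forall>k. koszul_chain l (B k)"
    and "\<forall>k. koszul_diff (iterated_Var \<phi> (Suc k)) (B k) = b k"
    and "\<forall>k\<ge>K. B k = (\<lambda>_. 0)"
proof -
  have "\<exists>\<beta>. koszul_chain l \<beta> \<and> koszul_diff (iterated_Var \<phi> (Suc k)) \<beta> = b k \<and>
      (K \<le> k \<longrightarrow> \<beta> = (\<lambda>_. 0))" for k
  proof (cases "K \<le> k")
    case True
    then show ?thesis
      using b_vanish by (intro exI[of _ "\<lambda>_. 0"]) (simp add: koszul_chain_def koszul_diff_0)
  next
    case False
    have "\<exists>\<beta>. koszul_chain l \<beta> \<and> koszul_diff (iterated_Var \<phi> (Suc k)) \<beta> = b k"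
    proof (cases "l = 1")
      case True
      have "in_ideal_of (iterated_Var \<phi> (Suc k)) (b k {})"
        using b_vanish rel by (intro u_coeff_empty_in_ideal[OF endo s_def, of K _ a]) simp_all
      moreover have "koszul_chain 0 (b k)"
        using b_chain True by simp
      ultimately show ?thesis
        using True koszul_boundary_degree_0 by simp
    next
      case False
      then have "1 \<le> l - 1" and "Suc (l - 1) = l"
        using \<open>1 \<le> l\<close> by simp_all
      then show ?thesis
        using koszul_exactD[OF koszul_exact_iterated_Var[OF endo flat] \<open>1 \<le> l - 1\<close>] b_chain b_cycle
        by metis
    qed
    then show ?thesis
      using False by blast
  qed
  then show thesis
    using that by metis
qed

lemma lift_e_coeffs:
  assumes endo: "alg_endo \<phi>" and flat: "flat_endo \<phi>" and s_def: "\<forall>i. \<phi> (Var i) = s i * Var i"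
    and "1 \<le> l"
    and a_chain: "\<forall>k. koszul_chain l (a k)"
    and a_vanish: "\<forall>k\<ge>K. a k = (\<lambda>_. 0)"
    and B_chain: "\<forall>k. koszul_chain l (B k)"
    and B_lift: "\<forall>k. koszul_diff (iterated_Var \<phi> (Suc k)) (B k) = b k"
    and B_vanish: "\<forall>k\<ge>K. B k = (\<lambda>_. 0)"
    and rel: "\<forall>k I. koszul_diff (iterated_Var \<phi> k) (a k) I + cone_map \<phi> s b k I = 0"
  obtains A where "\<forall>k. koszul_chain (Suc l) (A k)"
    and "\<forall>k I. koszul_diff (iterated_Var \<phi> k) (A k) I + cone_map \<phi> s B k I = a k I"
    and "\<forall>k\<ge>Suc K. A k = (\<lambda>_. 0)"
proof -
  define a' where "a' k = (\<lambda>I. a k I - cone_map \<phi> s B k I)" for k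
  have chain: "koszul_chain l (a' k)" for k
    using a_chain B_chain by (simp add: koszul_chain_def a'_def cone_map_def split: nat.split)
  have b_eq: "(\<lambda>j. koszul_diff (iterated_Var \<phi> (Suc j)) (B j)) = b"
    using B_lift by simp
  have cycle: "koszul_diff (iterated_Var \<phi> k) (a' k) = (\<lambda>_. 0)" for k
  proof
    fix J
    have "koszul_diff (iterated_Var \<phi> k) (a' k) J =
        koszul_diff (iterated_Var \<phi> k) (a k) J + cone_map \<phi> s b k J"
      unfolding a'_def koszul_diff_diff koszul_diff_cone_map[OF endo s_def] b_eq by simp
    then show "koszul_diff (iterated_Var \<phi> k) (a' k) J = 0"
      using rel by simp
  qed
  have vanish: "a' k = (\<lambda>_. 0)" if "Suc K \<le> k" for k
    using that a_vanish B_vanish by (auto simp: a'_def cone_map_def fun_eq_iff split: nat.split)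
  have "\<exists>\<alpha>. koszul_chain (Suc l) \<alpha> \<and> koszul_diff (iterated_Var \<phi> k) \<alpha> = a' k \<and>
      (Suc K \<le> k \<longrightarrow> \<alpha> = (\<lambda>_. 0))" for k
  proof (cases "Suc K \<le> k")
    case True
    then show ?thesis
      using vanish by (intro exI[of _ "\<lambda>_. 0"]) (simp add: koszul_chain_def koszul_diff_0)
  next
    case False
    then show ?thesis
      using koszul_exactD[OF koszul_exact_iterated_Var[OF endo flat] \<open>1 \<le> l\<close> chain cycle] by metis
  qed
  then obtain A where "\<forall>k. koszul_chain (Suc l) (A k) \<and> koszul_diff (iterated_Var \<phi> k) (A k) = a' k \<and>
      (Suc K \<le> k \<longrightarrow> A k = (\<lambda>_. 0))"
    by metis
  then show thesis
    by (intro that) (auto simp: a'_def)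
qed

lemma lookup_Abs_poly_mapping_bounded:
  fixes f :: "nat \<Rightarrow> 'a::zero"
  assumes "\<And>k. M \<le> k \<Longrightarrow> f k = 0"
  shows "Poly_Mapping.lookup (Abs_poly_mapping f) = f"
proof -
  have "{k. f k \<noteq> 0} \<subseteq> {..<M}"
    using assms not_le by auto
  then show ?thesis
    by (simp add: finite_subset)
qed

lemma coeffs_eventually_zero:
  fixes c :: "'b::finite \<Rightarrow> (nat \<Rightarrow>\<^sub>0 'a::zero)"
  obtains K where "\<And>B k. K \<le> k \<Longrightarrow> Poly_Mapping.lookup (c B) k = 0"
proof
  fix B k
  assume "Suc (Max (\<Union>B. Poly_Mapping.keys (c B))) \<le> k"
  moreover have "k \<in> Poly_Mapping.keys (c B) \<Longrightarrow> k \<le> Max (\<Union>B. Poly_Mapping.keys (c B))"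
    by (intro Max_ge) auto
  ultimately show "Poly_Mapping.lookup (c B) k = 0"
    by (auto simp: in_keys_iff)
qed

lemma chain_in_Suc_iff:
  "chain_in (Suc m) c \<longleftrightarrow>
    (\<forall>k. koszul_chain (Suc m) (theta_coeffs c False k) \<and> koszul_chain m (theta_coeffs c True k))"
proof -
  have "chain_in (Suc m) c \<longleftrightarrow>
      (\<forall>I. card I \<noteq> Suc m \<longrightarrow> c (I, False) = 0) \<and> (\<forall>I. card I \<noteq> m \<longrightarrow> c (I, True) = 0)"
    by (auto simp: chain_in_def kdeg_def)
  then show ?thesis
    by (auto simp: koszul_chain_def theta_coeffs_def poly_mapping_eq_iff fun_eq_iff)
qed

lemma dd_eq_iff_theta_coeffs:
  assumes "alg_endo \<phi>"
  shows "dd \<phi> s d = c \<longleftrightarrow> (\<forall>k I.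
    koszul_diff (iterated_Var \<phi> k) (theta_coeffs d False k) I + cone_map \<phi> s (theta_coeffs d True) k I =
      theta_coeffs c False k I \<and>
    koszul_diff (iterated_Var \<phi> (Suc k)) (theta_coeffs d True k) I = theta_coeffs c True k I)"
proof -
  have "dd \<phi> s d = c \<longleftrightarrow>
      (\<forall>k I t. Poly_Mapping.lookup (dd \<phi> s d (I, t)) k = Poly_Mapping.lookup (c (I, t)) k)"
    by (auto simp: fun_eq_iff poly_mapping_eq_iff)
  then show ?thesis
    by (auto simp: all_bool_eq lookup_dd_False[OF assms] lookup_dd_True[OF assms] theta_coeffs_def)
qed

lemma ex_skew_chain_theta_coeffs:
  assumes "\<forall>k\<ge>M. A k = (\<lambda>_. 0)" and "\<forall>k\<ge>M. B k = (\<lambda>_. 0)"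
  obtains d where "theta_coeffs d False = A" and "theta_coeffs d True = B"
proof
  define d where "d = (\<lambda>(I, t). Abs_poly_mapping (\<lambda>k. if t then B k I else A k I))"
  have "Poly_Mapping.lookup (d (I, t)) = (\<lambda>k. if t then B k I else A k I)" for I t
    unfolding d_def prod.case using assms by (intro lookup_Abs_poly_mapping_bounded[of M]) auto
  then show "theta_coeffs d False = A" and "theta_coeffs d True = B"
    by (simp_all add: theta_coeffs_def fun_eq_iff)
qed

lemma dd_exact:
  fixes \<phi> :: "('n::{finite,linorder}, 'k::comm_ring_1) mpoly \<Rightarrow> ('n, 'k) mpoly"
  assumes endo: "alg_endo \<phi>" and flat: "flat_endo \<phi>" and s_def: "\<forall>i. \<phi> (Var i) = s i * Var i"
    and "1 \<le> l" and chain: "chain_in l c" and cycle: "dd \<phi> s c = (\<lambda>_. 0)"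
  shows "\<exists>d. chain_in (l + 1) d \<and> dd \<phi> s d = c"
proof -
  obtain K :: nat where K: "\<And>B k. K \<le> k \<Longrightarrow> Poly_Mapping.lookup (c B) k = 0"
    using coeffs_eventually_zero[of c] by blast
  define a where "a = theta_coeffs c False"
  define b where "b = theta_coeffs c True"
  have "Suc (l - 1) = l"
    using \<open>1 \<le> l\<close> by simp
  then have a_chain: "\<forall>k. koszul_chain l (a k)" and b_chain: "\<forall>k. koszul_chain (l - 1) (b k)"
    using chain chain_in_Suc_iff[of "l - 1" c] by (simp_all add: a_def b_def)
  have a_vanish: "\<forall>k\<ge>K. a k = (\<lambda>_. 0)" and b_vanish: "\<forall>k\<ge>K. b k = (\<lambda>_. 0)"
    using K by (simp_all add: a_def b_def theta_coeffs_def)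
  have "\<forall>k I. koszul_diff (iterated_Var \<phi> k) (a k) I + cone_map \<phi> s b k I = 0 \<and>
      koszul_diff (iterated_Var \<phi> (Suc k)) (b k) I = 0"
    using cycle dd_eq_iff_theta_coeffs[OF endo, of s c "\<lambda>_. 0"] by (simp add: a_def b_def theta_coeffs_def)
  then have rel: "\<forall>k I. koszul_diff (iterated_Var \<phi> k) (a k) I + cone_map \<phi> s b k I = 0"
    and b_cycle: "\<forall>k. koszul_diff (iterated_Var \<phi> (Suc k)) (b k) = (\<lambda>_. 0)"
    by (simp_all add: fun_eq_iff)
  obtain B where B_chain: "\<forall>k. koszul_chain l (B k)"
    and B_lift: "\<forall>k. koszul_diff (iterated_Var \<phi> (Suc k)) (B k) = b k"
    and B_vanish: "\<forall>k\<ge>K. B k = (\<lambda>_. 0)"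
    by (rule lift_u_coeffs[OF endo flat s_def \<open>1 \<le> l\<close> b_chain b_cycle b_vanish rel])
  obtain A where A_chain: "\<forall>k. koszul_chain (Suc l) (A k)"
    and A_lift: "\<forall>k I. koszul_diff (iterated_Var \<phi> k) (A k) I + cone_map \<phi> s B k I = a k I"
    and A_vanish: "\<forall>k\<ge>Suc K. A k = (\<lambda>_. 0)"
    by (rule lift_e_coeffs[OF endo flat s_def \<open>1 \<le> l\<close> a_chain a_vanish B_chain B_lift B_vanish rel])
  obtain d where d_coeffs: "theta_coeffs d False = A" "theta_coeffs d True = B"
    using A_vanish B_vanish ex_skew_chain_theta_coeffs[of "Suc K" A B] by auto
  have "chain_in (l + 1) d"
    using A_chain B_chain by (simp add: chain_in_Suc_iff d_coeffs)
  moreover have "dd \<phi> s d = c"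
    using A_lift B_lift by (simp add: dd_eq_iff_theta_coeffs[OF endo] d_coeffs a_def b_def)
  ultimately show ?thesis
    by blast
qed

section \<open>The augmentation\<close>

definition augmentation :: "('n, 'k::comm_ring_1) skew \<Rightarrow> ('n, 'k) mpoly" where
  "augmentation a = (\<Sum>i\<in>Poly_Mapping.keys a. Poly_Mapping.lookup a i)"

lemma augmentation_eq_sum:
  assumes "finite S" and "Poly_Mapping.keys a \<subseteq> S"
  shows "augmentation a = (\<Sum>i\<in>S. Poly_Mapping.lookup a i)"
  unfolding augmentation_def using assms by (intro sum.mono_neutral_left) (auto simp: in_keys_iff)

lemma augmentation_add: "augmentation (a + b) = augmentation a + augmentation b"
proof -
  let ?S = "Poly_Mapping.keys a \<union> Poly_Mapping.keys b"
  have "augmentation (a + b) = (\<Sum>i\<in>?S. Poly_Mapping.lookup (a + b) i)"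
    by (rule augmentation_eq_sum) (auto simp: keys_add)
  also have "\<dots> = (\<Sum>i\<in>?S. Poly_Mapping.lookup a i) + (\<Sum>i\<in>?S. Poly_Mapping.lookup b i)"
    by (simp add: lookup_add sum.distrib)
  also have "\<dots> = augmentation a + augmentation b"
    using augmentation_eq_sum[of ?S a] augmentation_eq_sum[of ?S b] by simp
  finally show ?thesis .
qed

lemma augmentation_0: "augmentation 0 = 0"
  by (simp add: augmentation_def)

lemma augmentation_uminus: "augmentation (- a) = - augmentation a"
  using augmentation_add[of a "- a"] by (simp add: augmentation_0 add_eq_0_iff)

lemma augmentation_diff: "augmentation (a - b) = augmentation a - augmentation b"
  using augmentation_add[of a "- b"] by (simp add: augmentation_uminus)

lemma augmentation_sum: "augmentation (\<Sum>x\<in>A. f x) = (\<Sum>x\<in>A. augmentation (f x))"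
  by (induction A rule: infinite_finite_induct) (simp_all add: augmentation_0 augmentation_add)

lemma augmentation_single: "augmentation (Poly_Mapping.single n p) = p"
  by (simp add: augmentation_def)

lemma augmentation_emb: "augmentation (emb p) = p"
  by (simp add: emb_def augmentation_single)

lemma augmentation_Theta: "augmentation Theta = 1"
  by (simp add: Theta_def augmentation_single)

lemma augmentation_skmult:
  assumes "alg_endo \<phi>"
  shows "augmentation (skmult \<phi> r a) = act \<phi> r (augmentation a)"
proof -
  have "augmentation (skmult \<phi> r a) = (\<Sum>i\<in>Poly_Mapping.keys r. \<Sum>j\<in>Poly_Mapping.keys a.
      Poly_Mapping.lookup r i * (\<phi> ^^ i) (Poly_Mapping.lookup a j))"
    by (simp add: skmult_def augmentation_sum augmentation_single)
  also have "\<dots> = act \<phi> r (augmentation a)"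
    by (simp add: act_def augmentation_def alg_endo_sum[OF alg_endo_funpow[OF assms]] sum_distrib_left)
  finally show ?thesis .
qed

lemma in_In_funpow:
  assumes "alg_endo \<phi>" and "\<forall>i. \<phi> (Var i) = s i * Var i" and "in_In p"
  shows "in_In ((\<phi> ^^ k) p)"
proof (induction k)
  case 0
  then show ?case
    using assms(3) by simp
next
  case (Suc k)
  have "in_ideal_of Var (\<phi> (Var i))" for i
    using assms(2) by (simp add: in_ideal_of_mult_left in_ideal_of_generator)
  with Suc show ?case
    by (simp add: in_In_iff_in_ideal_of in_ideal_of_alg_endo[OF assms(1)])
qed

lemma in_In_act:
  assumes "alg_endo \<phi>" and "\<forall>i. \<phi> (Var i) = s i * Var i" and "in_In p"
  shows "in_In (act \<phi> r p)"
  unfolding act_def in_In_iff_in_ideal_of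
  using in_In_funpow[OF assms] by (simp add: in_ideal_of_sum in_ideal_of_mult_left in_In_iff_in_ideal_of)

lemma in_In_augmentation_boundary: "in_In (augmentation (bd \<phi> s B ({}, False)))"
proof (cases B)
  case (Pair I t)
  then show ?thesis
    by (cases t)
      (auto simp: in_In_iff_in_ideal_of augmentation_sum augmentation_0 augmentation_diff augmentation_uminus
        augmentation_emb augmentation_Theta
        intro!: in_ideal_of_sum in_ideal_of_mult_left in_ideal_of_generator in_ideal_of_0)
qed

text \<open>\<open>a - augmentation a = (\<Theta> - 1) e\<close>, where \<open>e\<close> has the coefficients \<open>theta_tail a\<close>.\<close>

definition theta_tail :: "('n, 'k::comm_ring_1) skew \<Rightarrow> nat \<Rightarrow> ('n, 'k) mpoly" where
  "theta_tail a j = (\<Sum>m\<in>Poly_Mapping.keys a. if j < m then Poly_Mapping.lookup a m else 0)"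

lemma theta_tail_eq_0: "Max (Poly_Mapping.keys a) \<le> j \<Longrightarrow> theta_tail a j = 0"
  unfolding theta_tail_def by (intro sum.neutral) (auto dest: Max_ge[OF finite_keys])

lemma sum_keys_if_eq: "(\<Sum>m\<in>Poly_Mapping.keys a. if m = k then Poly_Mapping.lookup a m else 0) =
    Poly_Mapping.lookup a k"
  by (simp add: in_keys_iff)

lemma augmentation_diff_theta_tail: "augmentation a - theta_tail a 0 = Poly_Mapping.lookup a 0"
proof -
  have "augmentation a - theta_tail a 0 =
      (\<Sum>m\<in>Poly_Mapping.keys a. if m = 0 then Poly_Mapping.lookup a m else 0)"
    unfolding augmentation_def theta_tail_def sum_subtractf[symmetric] by (intro sum.cong) auto
  then show ?thesis
    by (simp only: sum_keys_if_eq)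
qed

lemma theta_tail_diff_Suc: "theta_tail a j - theta_tail a (Suc j) = Poly_Mapping.lookup a (Suc j)"
proof -
  have "theta_tail a j - theta_tail a (Suc j) =
      (\<Sum>m\<in>Poly_Mapping.keys a. if m = Suc j then Poly_Mapping.lookup a m else 0)"
    unfolding theta_tail_def sum_subtractf[symmetric] by (intro sum.cong) auto
  then show ?thesis
    by (simp only: sum_keys_if_eq)
qed

lemma in_In_augmentation_iff:
  fixes \<phi> :: "('n::{finite,linorder}, 'k::comm_ring_1) mpoly \<Rightarrow> ('n, 'k) mpoly"
  assumes endo: "alg_endo \<phi>" and s_def: "\<forall>i. \<phi> (Var i) = s i * Var i"
  shows "in_In (augmentation a) \<longleftrightarrow> (\<exists>d. chain_in 1 d \<and> dd \<phi> s d ({}, False) = a)"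
proof
  assume "\<exists>d. chain_in 1 d \<and> dd \<phi> s d ({}, False) = a"
  then obtain d where "dd \<phi> s d ({}, False) = a"
    by blast
  then have "augmentation a = (\<Sum>B\<in>UNIV. act \<phi> (d B) (augmentation (bd \<phi> s B ({}, False))))"
    by (auto simp: dd_def augmentation_sum augmentation_skmult[OF endo])
  then show "in_In (augmentation a)"
    using in_In_act[OF endo s_def in_In_augmentation_boundary]
    by (simp add: in_In_iff_in_ideal_of in_ideal_of_sum)
next
  assume "in_In (augmentation a)"
  then obtain c where c: "augmentation a = (\<Sum>i\<in>UNIV. c i * Var i)"
    by (auto simp: in_In_def)
  define d where "d = (\<lambda>(I, t). if t then (if I = {} then Abs_poly_mapping (theta_tail a) else 0)
      else if card I = 1 then emb (c (the_elem I)) else 0)"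
  have "chain_in 1 d"
    by (auto simp: chain_in_def kdeg_def d_def)
  moreover have "dd \<phi> s d ({}, False) = a"
  proof (rule poly_mapping_eqI)
    fix k
    have "theta_coeffs d True j {} = theta_tail a j" for j
      using lookup_Abs_poly_mapping_bounded[of "Max (Poly_Mapping.keys a)" "theta_tail a"]
      by (simp add: theta_coeffs_def d_def theta_tail_eq_0)
    moreover have "koszul_diff (iterated_Var \<phi> k) (theta_coeffs d False k) {} =
        (if k = 0 then augmentation a else 0)"
      by (auto simp: koszul_diff_empty theta_coeffs_def d_def emb_def lookup_single iterated_Var_def c
          mult.commute)
    ultimately show "Poly_Mapping.lookup (dd \<phi> s d ({}, False)) k = Poly_Mapping.lookup a k"
      by (cases k)
        (simp_all add: lookup_dd_False[OF endo] cone_map_def augmentation_diff_theta_tail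
          theta_tail_diff_Suc alg_endo_one[OF endo] alg_endo_one[OF alg_endo_funpow[OF endo]])
  qed
  ultimately show "\<exists>d. chain_in 1 d \<and> dd \<phi> s d ({}, False) = a"
    by blast
qed

theorem theorem3:
  fixes \<phi> :: "('n::{finite,linorder}, 'k::comm_ring_1) mpoly \<Rightarrow> ('n, 'k) mpoly"
    and s :: "'n \<Rightarrow> ('n, 'k) mpoly"
  assumes endo: "alg_endo \<phi>"
    and flat: "flat_endo \<phi>"
    and in_ideal: "\<forall>i. \<exists>q. \<phi> (Var i) = q * Var i"
    and s_nz: "\<forall>i. s i \<noteq> 0"
    and s_def: "\<forall>i. \<phi> (Var i) = s i * Var i"
  shows "(\<forall>l\<ge>1. \<forall>c. chain_in l c \<and> dd \<phi> s c = (\<lambda>_. 0) \<longrightarrow>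
            (\<exists>d. chain_in (l + 1) d \<and> dd \<phi> s d = c))
       \<and> (\<exists>\<epsilon> :: ('n, 'k) skew \<Rightarrow> ('n, 'k) mpoly.
            (\<forall>a b. in_In (\<epsilon> (a + b) - (\<epsilon> a + \<epsilon> b))) \<and>
            (\<forall>r a. in_In (\<epsilon> (skmult \<phi> r a) - act \<phi> r (\<epsilon> a))) \<and>
            (\<forall>p. \<exists>a. in_In (\<epsilon> a - p)) \<and>
            (\<forall>a. in_In (\<epsilon> a) \<longleftrightarrow>
                 (\<exists>d. chain_in 1 d \<and> dd \<phi> s d ({}, False) = a)))"
proof -
  have "in_In (augmentation (emb p) - p)" for p
    by (simp add: augmentation_emb in_In_0)
  then have "(\<forall>a b. in_In (augmentation (a + b) - (augmentation a + augmentation b))) \<and>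
      (\<forall>r a. in_In (augmentation (skmult \<phi> r a) - act \<phi> r (augmentation a))) \<and>
      (\<forall>p. \<exists>a. in_In (augmentation a - p)) \<and>
      (\<forall>a. in_In (augmentation a) \<longleftrightarrow> (\<exists>d. chain_in 1 d \<and> dd \<phi> s d ({}, False) = a))"
    using in_In_augmentation_iff[OF endo s_def]
    by (auto simp: augmentation_add augmentation_skmult[OF endo] in_In_0)
  moreover have "\<forall>l\<ge>1. \<forall>c. chain_in l c \<and> dd \<phi> s c = (\<lambda>_. 0) \<longrightarrow>
      (\<exists>d. chain_in (l + 1) d \<and> dd \<phi> s d = c)"
    using dd_exact[OF endo flat s_def] by blast
  ultimately show ?thesis
    by blast
qed

end
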